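(* Let $(\lambda_k)_{k=-\infty}^\infty$ be a strictly increasing sequence of real numbers and $\delta_k:=\min\{\lambda_k-\lambda_{k-1},\lambda_{k+1}-\lambda_k\}$. Then for every positive integer $N$ and all nonnegative real numbers $t_1,\dots,t_N$, $$\sum_{m=1}^N\sum_{\substack{n=1\\ n\ne m}}^N\frac{\delta_m\delta_nt_mt_n}{(\lambda_m-\lambda_n)^2}\le\frac{\pi^2}{3}\sum_{n=1}^N t_n^2.$$ *)

theory Defs
  imports Complex_Main
begin

definition gap :: "(int \<Rightarrow> real) \<Rightarrow> int \<Rightarrow> real" where
  "gap lam k = min (lam k - lam (k - 1)) (lam (k + 1) - lam k)"

end

theory Submission
  imports Defs "HOL-Analysis.Gamma_Function"
begin

(* The kernel gap m * gap n / (lam m - lam n)^2 is symmetric and nonnegative, so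
   2 t_m t_n <= t_m^2 + t_n^2 (Schur's test) reduces the claim to the bound pi^2/3 for every row
   sum, i.e. pi^2/6 for every half-row; the left half-row is the right one of the reflected
   sequence k |-> - lam (- k).  On the right half-row put d = gap m, u_j = gap (m + 1 + j) / d and
   s_j = u_0 + ... + u_(j-1).  Telescoping the gaps shows lam (m + 1 + j) - lam m >= d * M_j with
   M_j = max (1 + s_j) (s_j + u_j), so the half-row is at most the sum of u_j / M_j^2.  Convexity
   of 1/x^2 gives u / (max a (a - 1 + u))^2 <= zeta(2, a) - zeta(2, a + u) for the Hurwitz zeta
   function zeta(2, a) = sum_k 1/(a + k)^2, so this sum telescopes to at most zeta(2, 1) = pi^2/6. *)

lemma convex_on_inverse_square: "convex_on {0<..} (\<lambda>x::real. 1 / x^2)"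
proof (rule convex_on_realI[where f' = "\<lambda>x. - 2 / x^3"])
  show "((\<lambda>x. 1 / x^2) has_real_derivative - 2 / x^3) (at x)" if "x \<in> {0<..}" for x :: real
    using that by (auto intro!: derivative_eq_intros simp: field_simps power2_eq_square power3_eq_cube)
  show "- 2 / x^3 \<le> - 2 / y^3" if "x \<in> {0<..}" "y \<in> {0<..}" "x \<le> y" for x y :: real
    using that by (simp add: frac_le power_mono)
qed auto

lemma inverse_square_decrement:
  fixes u v :: real
  assumes "0 < v" "0 \<le> u"
  defines "b \<equiv> max v (v - 1 + u)"
  shows "u * (1 / b^2 - 1 / (b + 1)^2) \<le> 1 / v^2 - 1 / (v + u)^2"
proof (cases "u \<le> 1")
  case True
  have "1 / ((1 - u) * v + u * (v + 1))^2 \<le> (1 - u) * (1 / v^2) + u * (1 / (v + 1)^2)"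
    using convex_onD[OF convex_on_inverse_square, of u v "v + 1"] True assms by simp
  moreover have "b = v" using True by (simp add: b_def)
  ultimately show ?thesis by (simp add: algebra_simps diff_divide_distrib)
next
  case False
  have "1 / ((1 - (u - 1) / u) * v + (u - 1) / u * (v + u))^2
      \<le> (1 - (u - 1) / u) * (1 / v^2) + (u - 1) / u * (1 / (v + u)^2)"
    using convex_onD[OF convex_on_inverse_square, of "(u - 1) / u" v "v + u"] False assms by simp
  moreover have "(1 - (u - 1) / u) * v + (u - 1) / u * (v + u) = b" "1 - (u - 1) / u = 1 / u"
    using False by (simp_all add: b_def field_simps)
  ultimately have "1 / b^2 \<le> 1 / u * (1 / v^2) + (u - 1) / u * (1 / (v + u)^2)" by simp
  then have "u * (1 / b^2) \<le> u * (1 / u * (1 / v^2) + (u - 1) / u * (1 / (v + u)^2))"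
    using False by (intro mult_left_mono) auto
  also have "\<dots> = 1 / v^2 + (u - 1) * (1 / (v + u)^2)"
    using False by (simp add: distrib_left)
  finally have "u * (1 / b^2) \<le> 1 / v^2 + (u - 1) * (1 / (v + u)^2)" .
  moreover have "b + 1 = v + u" using False by (simp add: b_def)
  ultimately show ?thesis by (simp add: algebra_simps diff_divide_distrib)
qed

definition hurwitz_zeta2 :: "real \<Rightarrow> real" where
  "hurwitz_zeta2 a = (\<Sum>k. 1 / (a + real k)^2)"

lemma summable_inverse_square_shift:
  fixes a :: real
  assumes "0 \<le> a"
  shows "summable (\<lambda>k. 1 / (a + real k)^2)"
proof (rule summable_comparison_test')
  show "summable (\<lambda>k. inverse (real k ^ 2))"
    by (rule inverse_power_summable) simp
  show "norm (1 / (a + real k)^2) \<le> inverse (real k ^ 2)" if "k \<ge> 1" for k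
    using assms that by (simp add: divide_inverse le_imp_inverse_le power_mono)
qed

lemma hurwitz_zeta2_sums: "0 \<le> a \<Longrightarrow> (\<lambda>k. 1 / (a + real k)^2) sums hurwitz_zeta2 a"
  unfolding hurwitz_zeta2_def by (intro summable_sums summable_inverse_square_shift)

lemma hurwitz_zeta2_nonneg: "0 \<le> a \<Longrightarrow> 0 \<le> hurwitz_zeta2 a"
  unfolding hurwitz_zeta2_def by (intro suminf_nonneg summable_inverse_square_shift) auto

lemma hurwitz_zeta2_one: "hurwitz_zeta2 1 = pi^2 / 6"
  using inverse_squares_sums hurwitz_zeta2_sums[of 1] sums_unique2
  by (fastforce simp: add.commute)

lemma hurwitz_zeta2_decrement:
  assumes "0 < a" "0 \<le> u"
  shows "u / (max a (a - 1 + u))^2 \<le> hurwitz_zeta2 a - hurwitz_zeta2 (a + u)"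
proof -
  define b where "b = max a (a - 1 + u)"
  have "b \<ge> 0" using assms by (simp add: b_def)
  then have "(\<lambda>k. u * (1 / (b + real k)^2)) \<longlonglongrightarrow> u * 0"
    by (intro tendsto_mult tendsto_const summable_LIMSEQ_zero summable_inverse_square_shift)
  then have telescoping:
    "(\<lambda>k. u / (b + real k)^2 - u / (b + real (Suc k))^2) sums (u / (b + real 0)^2 - 0)"
    using telescope_sums'[of "\<lambda>k. u / (b + real k)^2" 0] by simp
  have zeta_diff: "(\<lambda>k. 1 / (a + real k)^2 - 1 / (a + u + real k)^2)
      sums (hurwitz_zeta2 a - hurwitz_zeta2 (a + u))"
    using assms by (intro sums_diff hurwitz_zeta2_sums) auto
  have termwise: "u / (b + real k)^2 - u / (b + real (Suc k))^2
      \<le> 1 / (a + real k)^2 - 1 / (a + u + real k)^2" for k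
  proof -
    have "u / (b + real k)^2 - u / (b + real (Suc k))^2
        = u * (1 / (b + real k)^2 - 1 / (b + real k + 1)^2)"
      by (simp add: right_diff_distrib add_ac)
    also have "\<dots> \<le> 1 / (a + real k)^2 - 1 / (a + real k + u)^2"
    proof -
      have "max (a + real k) (a + real k - 1 + u) = b + real k" by (simp add: b_def)
      then show ?thesis using inverse_square_decrement[of "a + real k" u] assms by simp
    qed
    finally show ?thesis by (simp add: add_ac)
  qed
  show ?thesis
    using sums_le[OF termwise telescoping zeta_diff] by (simp add: b_def)
qed

lemma running_sum_inverse_square_le:
  fixes u :: "nat \<Rightarrow> real"
  assumes "\<And>i. 0 \<le> u i"
  shows "(\<Sum>j<K. u j / (max (1 + (\<Sum>i<j. u i)) (\<Sum>i\<le>j. u i))^2) \<le> pi^2 / 6"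
proof -
  define s where "s j = 1 + (\<Sum>i<j. u i)" for j
  have s_ge: "1 \<le> s j" for j
    using assms by (simp add: s_def sum_nonneg)
  have partial_sums: "s j - 1 + u j = (\<Sum>i\<le>j. u i)" for j
    by (simp add: s_def lessThan_Suc_atMost[symmetric])
  have "(\<Sum>j<K. u j / (max (s j) (\<Sum>i\<le>j. u i))^2) + hurwitz_zeta2 (s K) \<le> hurwitz_zeta2 1"
  proof (induction K)
    case 0
    show ?case by (simp add: s_def)
  next
    case (Suc K)
    have "s (Suc K) = s K + u K" by (simp add: s_def)
    then have "u K / (max (s K) (\<Sum>i\<le>K. u i))^2 \<le> hurwitz_zeta2 (s K) - hurwitz_zeta2 (s (Suc K))"
      using hurwitz_zeta2_decrement[of "s K" "u K"] s_ge[of K] assms partial_sums[of K] by simp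
    with Suc.IH show ?case by simp
  qed
  moreover have "0 \<le> hurwitz_zeta2 (s K)"
    using s_ge[of K] by (intro hurwitz_zeta2_nonneg) simp
  ultimately show ?thesis
    by (simp add: s_def hurwitz_zeta2_one)
qed

lemma weighted_inverse_square_sum_le:
  fixes d :: real and w x :: "nat \<Rightarrow> real"
  assumes "0 < d" and "\<And>i. 0 \<le> w i"
    and "\<And>j. d + (\<Sum>i<j. w i) \<le> x j" and "\<And>j. (\<Sum>i\<le>j. w i) \<le> x j"
  shows "(\<Sum>j<K. d * w j / (x j)^2) \<le> pi^2 / 6"
proof -
  define u where "u i = w i / d" for i
  have "d * w j / (x j)^2 \<le> u j / (max (1 + (\<Sum>i<j. u i)) (\<Sum>i\<le>j. u i))^2" for j
  proof -
    define M where "M = max (1 + (\<Sum>i<j. u i)) (\<Sum>i\<le>j. u i)"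
    have "d * (1 + (\<Sum>i<j. u i)) = d + (\<Sum>i<j. w i)" "d * (\<Sum>i\<le>j. u i) = (\<Sum>i\<le>j. w i)"
      using assms(1) by (simp_all add: u_def sum_distrib_left algebra_simps)
    then have dM_le: "d * M \<le> x j"
      using assms(3,4)[of j] by (simp add: M_def max_mult_distrib_left less_imp_le[OF assms(1)])
    have "0 \<le> (\<Sum>i<j. u i)"
      using assms(1,2) by (intro sum_nonneg) (simp add: u_def)
    then have dM_pos: "0 < d * M"
      using assms(1) by (simp add: M_def)
    then have "(d * M)^2 \<le> (x j)^2"
      using dM_le by (intro power_mono) auto
    then have "d * w j / (x j)^2 \<le> d * w j / (d * M)^2"
      using assms(1,2) dM_pos dM_le by (intro divide_left_mono mult_pos_pos) auto
    also have "\<dots> = u j / M^2"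
      using assms(1) by (simp add: u_def power2_eq_square)
    finally show ?thesis by (simp add: M_def)
  qed
  then have "(\<Sum>j<K. d * w j / (x j)^2)
      \<le> (\<Sum>j<K. u j / (max (1 + (\<Sum>i<j. u i)) (\<Sum>i\<le>j. u i))^2)"
    by (intro sum_mono)
  also have "\<dots> \<le> pi^2 / 6"
    using assms(1,2) by (intro running_sum_inverse_square_le) (simp add: u_def)
  finally show ?thesis .
qed

lemma gap_le_left: "gap lam k \<le> lam k - lam (k - 1)"
  by (simp add: gap_def)

lemma gap_le_right: "gap lam k \<le> lam (k + 1) - lam k"
  by (simp add: gap_def)

lemma gap_pos: "strict_mono lam \<Longrightarrow> 0 < gap lam k"
  by (simp add: gap_def strict_mono_less)

lemma gap_reflect: "gap (\<lambda>k. - lam (- k)) k = gap lam (- k)"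
proof -
  have "- (k - 1) = - k + 1" "- (k + 1) = - k - 1" by simp_all
  then show ?thesis by (simp add: gap_def min.commute)
qed

lemma gap_sums_le_distance:
  fixes lam :: "int \<Rightarrow> real"
  shows "gap lam m + (\<Sum>i<j. gap lam (m + 1 + int i)) \<le> lam (m + 1 + int j) - lam m"
    and "(\<Sum>i\<le>j. gap lam (m + 1 + int i)) \<le> lam (m + 1 + int j) - lam m"
proof -
  define D where "D i = lam (m + 1 + int i) - lam (m + int i)" for i
  have distance: "lam (m + 1 + int j) - lam m = (\<Sum>i<Suc j. D i)"
    using sum_lessThan_telescope[of "\<lambda>i. lam (m + int i)" "Suc j"]
    by (simp add: D_def add.assoc)
  have "gap lam m \<le> D 0" "gap lam (m + 1 + int i) \<le> D (Suc i)" for i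
    using gap_le_right[of lam m] gap_le_right[of lam "m + 1 + int i"]
    by (simp_all add: D_def algebra_simps)
  then show "gap lam m + (\<Sum>i<j. gap lam (m + 1 + int i)) \<le> lam (m + 1 + int j) - lam m"
    unfolding distance sum.lessThan_Suc_shift by (intro add_mono sum_mono)
  have "gap lam (m + 1 + int i) \<le> D i" for i
    using gap_le_left[of lam "m + 1 + int i"] by (simp add: D_def)
  then show "(\<Sum>i\<le>j. gap lam (m + 1 + int i)) \<le> lam (m + 1 + int j) - lam m"
    unfolding distance lessThan_Suc_atMost by (intro sum_mono)
qed

definition gap_kernel :: "(int \<Rightarrow> real) \<Rightarrow> int \<Rightarrow> int \<Rightarrow> real" where
  "gap_kernel lam m n = gap lam m * gap lam n / (lam m - lam n)^2"

lemma gap_kernel_commute: "gap_kernel lam m n = gap_kernel lam n m"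
  by (simp add: gap_kernel_def power2_commute)

lemma gap_kernel_nonneg:
  assumes "strict_mono lam"
  shows "0 \<le> gap_kernel lam m n"
  using gap_pos[OF assms, of m] gap_pos[OF assms, of n] by (simp add: gap_kernel_def)

lemma gap_kernel_reflect: "gap_kernel (\<lambda>k. - lam (- k)) (- m) (- n) = gap_kernel lam m n"
  by (simp add: gap_kernel_def gap_reflect power2_commute)

lemma gap_kernel_sum_right_le:
  assumes "strict_mono lam" and "finite A" and "A \<subseteq> {m<..}"
  shows "(\<Sum>n\<in>A. gap_kernel lam m n) \<le> pi^2 / 6"
proof -
  define K where "K = nat (Max (insert m A) - m)"
  have "A \<subseteq> (\<lambda>j. m + 1 + int j) ` {..<K}"
  proof
    fix n assume "n \<in> A"
    with assms(2,3) have "m < n" "n \<le> Max (insert m A)" by auto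
    then have "nat (n - m - 1) \<in> {..<K}" "n = m + 1 + int (nat (n - m - 1))"
      by (auto simp: K_def)
    then show "n \<in> (\<lambda>j. m + 1 + int j) ` {..<K}" by blast
  qed
  then have "(\<Sum>n\<in>A. gap_kernel lam m n) \<le> (\<Sum>n\<in>(\<lambda>j. m + 1 + int j) ` {..<K}. gap_kernel lam m n)"
    using gap_kernel_nonneg[OF assms(1)] by (intro sum_mono2) auto
  also have "\<dots> = (\<Sum>j<K. gap lam m * gap lam (m + 1 + int j) / (lam (m + 1 + int j) - lam m)^2)"
    by (simp add: sum.reindex inj_on_def gap_kernel_def power2_commute)
  also have "\<dots> \<le> pi^2 / 6"
    by (rule weighted_inverse_square_sum_le)
      (simp_all add: gap_pos[OF assms(1)] less_imp_le[OF gap_pos[OF assms(1)]] gap_sums_le_distance)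
  finally show ?thesis .
qed

lemma gap_kernel_sum_left_le:
  assumes "strict_mono lam" and "finite A" and "A \<subseteq> {..<m}"
  shows "(\<Sum>n\<in>A. gap_kernel lam m n) \<le> pi^2 / 6"
proof -
  have "strict_mono (\<lambda>k. - lam (- k))"
    using assms(1) by (simp add: strict_mono_def strict_mono_less)
  then have "(\<Sum>n\<in>uminus ` A. gap_kernel (\<lambda>k. - lam (- k)) (- m) n) \<le> pi^2 / 6"
    using assms(2,3) by (intro gap_kernel_sum_right_le) auto
  also have "(\<Sum>n\<in>uminus ` A. gap_kernel (\<lambda>k. - lam (- k)) (- m) n) = (\<Sum>n\<in>A. gap_kernel lam m n)"
    by (simp add: sum.reindex gap_kernel_reflect)
  finally show ?thesis .
qed

lemma gap_kernel_row_sum_le: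
  assumes "strict_mono lam" and "finite S"
  shows "(\<Sum>n\<in>S - {m}. gap_kernel lam m n) \<le> pi^2 / 3"
proof -
  have split: "S - {m} = {n\<in>S. m < n} \<union> {n\<in>S. n < m}" by auto
  have "(\<Sum>n\<in>S - {m}. gap_kernel lam m n)
      = (\<Sum>n\<in>{n\<in>S. m < n}. gap_kernel lam m n) + (\<Sum>n\<in>{n\<in>S. n < m}. gap_kernel lam m n)"
    unfolding split by (rule sum.union_disjoint) (use assms(2) in auto)
  also have "\<dots> \<le> pi^2 / 6 + pi^2 / 6"
    using assms by (intro add_mono gap_kernel_sum_right_le gap_kernel_sum_left_le) auto
  finally show ?thesis by simp
qed

lemma symmetric_kernel_quadratic_form_le:
  fixes a :: "'a \<Rightarrow> 'a \<Rightarrow> real" and t :: "'a \<Rightarrow> real"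
  assumes "finite S"
    and nonneg: "\<And>m n. m \<in> S \<Longrightarrow> n \<in> S \<Longrightarrow> 0 \<le> a m n"
    and sym: "\<And>m n. m \<in> S \<Longrightarrow> n \<in> S \<Longrightarrow> a m n = a n m"
    and row: "\<And>m. m \<in> S \<Longrightarrow> (\<Sum>n\<in>S - {m}. a m n) \<le> C"
  shows "(\<Sum>m\<in>S. \<Sum>n\<in>S - {m}. a m n * t m * t n) \<le> C * (\<Sum>n\<in>S. (t n)^2)"
proof -
  define X where "X = (\<Sum>m\<in>S. \<Sum>n\<in>S - {m}. a m n * (t m)^2)"
  have "(\<Sum>m\<in>S. \<Sum>n\<in>S - {m}. a m n * (t n)^2) = (\<Sum>n\<in>S. \<Sum>m\<in>S - {n}. a m n * (t n)^2)"
    using sum.swap_restrict[OF assms(1) assms(1), of "\<lambda>m n. a m n * (t n)^2" "(\<noteq>)"]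
    by (simp add: set_diff_eq conj_commute eq_commute)
  also have "\<dots> = X"
    unfolding X_def by (intro sum.cong refl) (simp add: sym)
  finally have swapped: "(\<Sum>m\<in>S. \<Sum>n\<in>S - {m}. a m n * (t n)^2) = X" .
  have "2 * (\<Sum>m\<in>S. \<Sum>n\<in>S - {m}. a m n * t m * t n)
      \<le> (\<Sum>m\<in>S. \<Sum>n\<in>S - {m}. a m n * (t m)^2 + a m n * (t n)^2)"
    unfolding sum_distrib_left
  proof (intro sum_mono)
    fix m n assume "m \<in> S" "n \<in> S - {m}"
    then have "a m n * (2 * t m * t n) \<le> a m n * ((t m)^2 + (t n)^2)"
      using nonneg sum_squares_bound[of "t m" "t n"] by (intro mult_left_mono) auto
    then show "2 * (a m n * t m * t n) \<le> a m n * (t m)^2 + a m n * (t n)^2"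
      by (simp add: algebra_simps)
  qed
  also have "\<dots> = 2 * X"
    using swapped by (simp add: sum.distrib X_def)
  finally have "(\<Sum>m\<in>S. \<Sum>n\<in>S - {m}. a m n * t m * t n) \<le> X" by simp
  also have "X = (\<Sum>m\<in>S. (t m)^2 * (\<Sum>n\<in>S - {m}. a m n))"
    by (simp add: X_def sum_distrib_left mult.commute)
  also have "\<dots> \<le> (\<Sum>m\<in>S. (t m)^2 * C)"
    using row by (intro sum_mono mult_left_mono) auto
  also have "\<dots> = C * (\<Sum>n\<in>S. (t n)^2)"
    by (simp add: sum_distrib_left mult.commute)
  finally show ?thesis .
qed

theorem proposition4:
  fixes lam :: "int \<Rightarrow> real" and N :: nat and t :: "int \<Rightarrow> real"
  assumes "strict_mono lam"
    and "N \<ge> 1"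
    and "\<And>n. 1 \<le> n \<Longrightarrow> n \<le> int N \<Longrightarrow> t n \<ge> 0"
  shows "(\<Sum>m\<in>{1..int N}. \<Sum>n\<in>{1..int N} - {m}.
            gap lam m * gap lam n * t m * t n / (lam m - lam n)^2)
         \<le> pi^2 / 3 * (\<Sum>n\<in>{1..int N}. (t n)^2)"
proof -
  have "(\<Sum>m\<in>{1..int N}. \<Sum>n\<in>{1..int N} - {m}.
            gap lam m * gap lam n * t m * t n / (lam m - lam n)^2)
      = (\<Sum>m\<in>{1..int N}. \<Sum>n\<in>{1..int N} - {m}. gap_kernel lam m n * t m * t n)"
    by (simp add: gap_kernel_def)
  also have "\<dots> \<le> pi^2 / 3 * (\<Sum>n\<in>{1..int N}. (t n)^2)"
    using assms(1)
    by (intro symmetric_kernel_quadratic_form_le gap_kernel_nonneg gap_kernel_commute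
        gap_kernel_row_sum_le) auto
  finally show ?thesis .
qed

end
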